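(* Let $n\ge 3$ be an integer. Let $F_k$ be the Fibonacci numbers ($F_0=0$, $F_1=1$, $F_{k+2}=F_k+F_{k+1}$) and $L_k$ the Lucas numbers ($L_1=1$, $L_2=3$, $L_{k+2}=L_k+L_{k+1}$). Set $d=\gcd(F_{n-2}+1,F_{n-1}-1)$, $\mu=(F_{n-1}-1)/d$, $\nu=(F_{n-2}+1)/d$ and $t=(L_n-1-(-1)^n)/d$. For given $r,s$ put $h=-(s\mu+r\nu)d$. Then: (i) if $n\equiv 0\pmod 4$: $d=F_{n/2}$, $t=5F_{n/2}$, and for $r=F_{n/2-1}$, $s=-F_{n/2-2}$ one has $r\mu+s(\mu+\nu)=1$ and $h=-2F_{n/2}$; (ii) if $n\equiv 2\pmod 4$: $d=L_{n/2}$, $t=L_{n/2}$, and for $r=F_{n/2-2}$, $s=-F_{n/2-3}$ one has $r\mu+s(\mu+\nu)=1$ and $h=-L_{n/2}$; (iii) if $n\equiv 1,5,7,$ or $11\pmod{12}$: $d=1$, $t=L_n$, and for $r=(F_{n-2}-1)/2$, $s=(1-F_{n-3})/2$ (rational numbers) one has $r\mu+s(\mu+\nu)=1$ and $h=(1-L_{n-2})/2$; (iv) if $n\equiv 3$ or $9\pmod{12}$: $d=2$, $t=L_n/2$, and for $r=F_{n-2}-1$, $s=1-F_{n-3}$ one has $r\mu+s(\mu+\nu)=1$ and $h=1-L_{n-2}$. *)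

theory Defs
  imports "HOL-Number_Theory.Fib" Complex_Main
begin

fun lucas :: "nat \<Rightarrow> int" where
  "lucas 0 = 2"
| "lucas (Suc 0) = 1"
| "lucas (Suc (Suc k)) = lucas k + lucas (Suc k)"

abbreviation F :: "nat \<Rightarrow> int" where "F k \<equiv> int (fib k)"

definition dd :: "nat \<Rightarrow> int" where
  "dd n = gcd (F (n - 2) + 1) (F (n - 1) - 1)"

definition mu :: "nat \<Rightarrow> rat" where
  "mu n = of_int (F (n - 1) - 1) / of_int (dd n)"

definition nu :: "nat \<Rightarrow> rat" where
  "nu n = of_int (F (n - 2) + 1) / of_int (dd n)"

definition tt :: "nat \<Rightarrow> rat" where
  "tt n = of_int (lucas n - 1 - (-1) ^ n) / of_int (dd n)"

definition hh :: "nat \<Rightarrow> rat \<Rightarrow> rat \<Rightarrow> rat" where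
  "hh n r s = - (s * mu n + r * nu n) * of_int (dd n)"

end

theory Submission
  imports Defs
begin

text \<open>For even \<open>n = 2m\<close> the numbers \<open>F(n-2) + 1\<close> and \<open>F(n-1) - 1\<close> factor as
  \<open>F(m) L(m-2)\<close> and \<open>F(m) L(m-1)\<close> when \<open>m\<close> is even, and as \<open>L(m) F(m-2)\<close> and
  \<open>L(m) F(m-1)\<close> when \<open>m\<close> is odd. The cofactors are consecutive Lucas resp. Fibonacci numbers,
  hence coprime, which identifies \<open>d\<close>, \<open>\<mu>\<close> and \<open>\<nu>\<close>. For odd \<open>n\<close> an explicit integer
  combination of the two numbers equals 2, so \<open>d\<close> is 1 or 2, and it is 2 exactly when both
  numbers are even, i.e. when \<open>3 | n\<close>, since \<open>F(k)\<close> is even iff \<open>3 | k\<close>.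
  All remaining identities follow from Cassini's identity after expanding everything in
  \<open>F(k)\<close> and \<open>F(k+1)\<close>.\<close>

lemma lucas_eq_fib: "lucas k = 2 * F (k + 1) - F k"
  by (induction k rule: lucas.induct) (auto simp: algebra_simps)

lemma lucas_pos: "lucas k > 0"
  by (induction k rule: lucas.induct) auto

lemma coprime_lucas_Suc: "coprime (lucas k) (lucas (k + 1))"
proof (induction k)
  case 0
  then show ?case by simp
next
  case (Suc k)
  have "gcd (lucas (Suc k)) (lucas k + lucas (Suc k)) = gcd (lucas k) (lucas (Suc k))"
    by (metis gcd.commute gcd_add1)
  with Suc show ?case by (simp add: coprime_iff_gcd_eq_1)
qed

lemma fib_Cassini_int': "F k * (F k + F (k + 1)) - F (k + 1) ^ 2 = - ((-1) ^ k)"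
  using fib_Cassini_int[of k] by (simp add: algebra_simps)

lemma fib_double:
  "F (2 * k) = F k * (2 * F (k + 1) - F k)"
  "F (2 * k + 1) = F k ^ 2 + F (k + 1) ^ 2"
  "F (2 * k + 2) = F (k + 1) * (2 * F k + F (k + 1))"
proof -
  have "fib (2 * k + 1) = fib (k + 1) * fib (k + 1) + fib k * fib k"
    using fib_add[of k k] by (simp only: mult_2 Suc_eq_plus1)
  then show odd: "F (2 * k + 1) = F k ^ 2 + F (k + 1) ^ 2"
    by (simp only: power2_eq_square of_nat_add of_nat_mult add.commute)
  have "fib (2 * k + 2) = fib (k + 2) * fib (k + 1) + fib (k + 1) * fib k"
    using fib_add[of k "Suc k"] by (simp only: mult_2 Suc_eq_plus1 add_2_eq_Suc' add.assoc)
  moreover have "fib (k + 2) = fib k + fib (k + 1)"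
    using fib_plus_2[of k] by (simp only: add.commute)
  ultimately show even: "F (2 * k + 2) = F (k + 1) * (2 * F k + F (k + 1))"
    by (simp only: of_nat_add of_nat_mult algebra_simps mult_2)
  have "fib (2 * k + 2) = fib (2 * k) + fib (2 * k + 1)"
    using fib_plus_2[of "2 * k"] by (simp only: add.commute)
  then show "F (2 * k) = F k * (2 * F (k + 1) - F k)"
    using odd even by (simp only: of_nat_add) (simp add: algebra_simps power2_eq_square)
qed

lemma fib_double_eq_fib_mult_lucas: "F (2 * k) = F k * lucas k"
  by (simp add: fib_double lucas_eq_fib)

lemma lucas_double: "lucas (2 * k) = lucas k ^ 2 - 2 * (-1) ^ k"
  using fib_Cassini_int'[of k] unfolding lucas_eq_fib fib_double
  by (simp add: algebra_simps power2_eq_square)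

lemma lucas_square: "lucas k ^ 2 = 5 * F k ^ 2 + 4 * (-1) ^ k"
  using fib_Cassini_int'[of k] unfolding lucas_eq_fib
  by (simp add: algebra_simps power2_eq_square)

lemma fib_lucas_cross_diff: "F (k + 1) * lucas k - F k * lucas (k + 1) = 2 * (-1) ^ k"
  using fib_Cassini_int'[of k] unfolding lucas_eq_fib
  by (simp add: algebra_simps power2_eq_square)

lemma fib_dOcagne: "F (k + 1) * F (k + 2) - F k * F (k + 3) = (-1) ^ k"
  using fib_Cassini_int'[of k] by (simp add: eval_nat_numeral algebra_simps power2_eq_square)

text \<open>Instances of \<open>F (p + q) + (-1)^q F (p - q) = F p * L q\<close> and
  \<open>F (p + q) - (-1)^q F (p - q) = L p * F q\<close> with \<open>p - q \<in> {1, 2}\<close>.\<close>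

lemma fib_double_sign_factorizations:
  "F (2 * k + 2) + (-1) ^ k = F (k + 2) * lucas k"
  "F (2 * k + 2) - (-1) ^ k = lucas (k + 2) * F k"
  "F (2 * k + 3) - (-1) ^ k = F (k + 2) * lucas (k + 1)"
  "F (2 * k + 3) + (-1) ^ k = lucas (k + 2) * F (k + 1)"
proof -
  have "F (2 * k + 3) = F (2 * k + 1) + F (2 * k + 2)"
    using fib_plus_2[of "2 * k + 1"] by (simp add: eval_nat_numeral)
  with fib_Cassini_int'[of k] show
    "F (2 * k + 2) + (-1) ^ k = F (k + 2) * lucas k"
    "F (2 * k + 2) - (-1) ^ k = lucas (k + 2) * F k"
    "F (2 * k + 3) - (-1) ^ k = F (k + 2) * lucas (k + 1)"
    "F (2 * k + 3) + (-1) ^ k = lucas (k + 2) * F (k + 1)"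
    unfolding fib_double lucas_eq_fib
    by (simp_all add: eval_nat_numeral algebra_simps power2_eq_square)
qed

lemma even_fib_iff_3_dvd: "even (fib k) \<longleftrightarrow> 3 dvd k"
proof (induction k rule: less_induct)
  case (less k)
  show ?case
  proof (cases "k < 3")
    case True
    then consider "k = 0" | "k = 1" | "k = 2" by linarith
    then show ?thesis by cases simp_all
  next
    case False
    then obtain m where k: "k = m + 3"
      by (metis add.commute le_add_diff_inverse not_less)
    then have "fib k = 2 * fib (m + 1) + fib m"
      by (simp add: numeral_3_eq_3)
    with less.IH[of m] k show ?thesis by simp
  qed
qed

lemma gcd_eq_if_lincomb_eq_2:
  fixes x y u v :: int
  assumes "u * x + v * y = 2"
  shows "gcd x y = (if even x \<and> even y then 2 else 1)"
proof -
  have "gcd x y dvd 2" using assms by (metis dvd_add dvd_mult gcd_dvd1 gcd_dvd2)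
  then have le: "gcd x y \<le> 2" and pos: "gcd x y > 0" by (auto dest: zdvd_imp_le)
  show ?thesis
  proof (cases "even x \<and> even y")
    case True
    then have "2 \<le> gcd x y" using pos by (simp add: zdvd_imp_le)
    with le True show ?thesis by simp
  next
    case False
    then have "odd (gcd x y)" by (meson dvd_trans gcd_dvd1 gcd_dvd2)
    with le pos False show ?thesis by presburger
  qed
qed

lemma dd_mu_nu_eqI:
  assumes x: "F (n - 2) + 1 = d * P" and y: "F (n - 1) - 1 = d * Q"
    and "coprime P Q" and "d > 0"
  shows "dd n = d" "mu n = of_int Q" "nu n = of_int P"
proof -
  show dd: "dd n = d"
    unfolding dd_def x y using gcd_mult_distrib_int[of d P Q] assms(3,4) by simp
  show "mu n = of_int Q" "nu n = of_int P"
    unfolding mu_def nu_def dd x y using \<open>d > 0\<close> by simp_all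
qed

lemma case_mod_4_eq_0:
  assumes "n mod 4 = 0" "n \<ge> 3"
  shows "dd n = F (n div 2)" (is ?dd)
    and "tt n = 5 * of_int (F (n div 2))" (is ?tt)
    and "of_int (F (n div 2 - 1)) * mu n + - of_int (F (n div 2 - 2)) * (mu n + nu n) = 1"
      (is ?lincomb)
    and "hh n (of_int (F (n div 2 - 1))) (- of_int (F (n div 2 - 2))) = - 2 * of_int (F (n div 2))"
      (is ?hh)
proof -
  define m k where "m = n div 2" and "k = n div 2 - 2"
  have n: "n = 2 * m" and m: "m = k + 2" and "even k"
    using assms unfolding m_def k_def by presburger+
  have idx: "m - 1 = k + 1" "m - 2 = k" "n - 2 = 2 * k + 2" "n - 1 = 2 * k + 3"
    using n m by simp_all
  have sign: "(-1::int) ^ k = 1" "(-1::int) ^ m = 1" using \<open>even k\<close> m by simp_all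
  have x: "F (n - 2) + 1 = F m * lucas k"
    using fib_double_sign_factorizations(1)[of k] unfolding idx sign m .
  have y: "F (n - 1) - 1 = F m * lucas (k + 1)"
    using fib_double_sign_factorizations(3)[of k] unfolding idx sign m .
  have "m > 0" using m by simp
  then have pos: "F m > 0" using fib_neq_0_nat by simp
  from dd_mu_nu_eqI[OF x y coprime_lucas_Suc pos] have d: "dd n = F m" and mu: "mu n = of_int (lucas (k + 1))"
    and nu: "nu n = of_int (lucas k)" .
  have "lucas n - 1 - (-1) ^ n = F m * (5 * F m)"
    using lucas_double[of m] lucas_square[of m] sign n
    by (simp add: power2_eq_square)
  then have tt: "tt n = 5 * of_int (F m)"
    unfolding tt_def d using pos by simp
  have lincomb_int: "F (k + 1) * lucas (k + 1) - F k * (lucas (k + 1) + lucas k) = 1"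
    using fib_double_eq_fib_mult_lucas[of "k + 1"] fib_double_sign_factorizations(2)[of k] sign
    by (simp add: algebra_simps)
  have lincomb_eq: "of_int (F (k + 1)) * mu n + - of_int (F k) * (mu n + nu n) = 1"
    unfolding mu nu using arg_cong[OF lincomb_int, of rat_of_int]
    by (simp add: algebra_simps)
  have hh_int: "F (k + 1) * lucas k - F k * lucas (k + 1) = 2"
    using fib_lucas_cross_diff[of k] sign by simp
  have hh_eq: "hh n (of_int (F (k + 1))) (- of_int (F k)) = - 2 * of_int (F m)"
    unfolding hh_def mu nu d using arg_cong[OF hh_int, of rat_of_int] by (simp add: algebra_simps)
  show ?dd ?tt ?lincomb ?hh
    unfolding m_def[symmetric] unfolding idx using d tt lincomb_eq hh_eq by simp_all
qed

lemma case_mod_4_eq_2: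
  assumes "n mod 4 = 2" "n \<ge> 3"
  shows "dd n = lucas (n div 2)" (is ?dd)
    and "tt n = of_int (lucas (n div 2))" (is ?tt)
    and "of_int (F (n div 2 - 2)) * mu n + - of_int (F (n div 2 - 3)) * (mu n + nu n) = 1"
      (is ?lincomb)
    and "hh n (of_int (F (n div 2 - 2))) (- of_int (F (n div 2 - 3))) = - of_int (lucas (n div 2))"
      (is ?hh)
proof -
  define m j where "m = n div 2" and "j = n div 2 - 3"
  have n: "n = 2 * m" and "m = j + 3" and "even j"
    using assms unfolding m_def j_def by presburger+
  then have idx: "m - 2 = j + 1" "m - 3 = j" "n - 2 = 2 * (j + 1) + 2"
    "n - 1 = 2 * (j + 1) + 3" "j + 1 + 2 = m" "j + 1 + 1 = j + 2"
    by simp_all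
  have sign: "(-1::int) ^ j = 1" "(-1::int) ^ (j + 1) = -1" "(-1::int) ^ m = -1"
    using \<open>even j\<close> \<open>m = j + 3\<close> by simp_all
  have x: "F (n - 2) + 1 = lucas m * F (j + 1)"
    using fib_double_sign_factorizations(2)[of "j + 1"] unfolding idx sign by simp
  have y: "F (n - 1) - 1 = lucas m * F (j + 2)"
    using fib_double_sign_factorizations(4)[of "j + 1"] unfolding idx sign by simp
  have "coprime (F (j + 1)) (F (j + 2))"
    using coprime_fib_Suc_nat[of "j + 1"] by (simp del: fib.simps)
  from dd_mu_nu_eqI[OF x y this lucas_pos] have d: "dd n = lucas m" and mu: "mu n = of_int (F (j + 2))"
    and nu: "nu n = of_int (F (j + 1))" .
  have "lucas n - 1 - (-1) ^ n = lucas m * lucas m"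
    using lucas_double[of m] sign n by (simp add: power2_eq_square)
  then have tt: "tt n = of_int (lucas m)"
    unfolding tt_def d using lucas_pos[of m] by simp
  have "F (j + 3) = F (j + 2) + F (j + 1)"
    by (simp add: eval_nat_numeral)
  with fib_dOcagne[of j] sign have lincomb_int: "F (j + 1) * F (j + 2) - F j * (F (j + 2) + F (j + 1)) = 1"
    by simp
  have lincomb_eq: "of_int (F (j + 1)) * mu n + - of_int (F j) * (mu n + nu n) = 1"
    unfolding mu nu using arg_cong[OF lincomb_int, of rat_of_int] by (simp add: algebra_simps)
  have hh_int: "F (j + 1) * F (j + 1) - F j * F (j + 2) = 1"
    using fib_Cassini_int'[of j] sign by (simp add: algebra_simps power2_eq_square)
  have hh_eq: "hh n (of_int (F (j + 1))) (- of_int (F j)) = - of_int (lucas m)"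
    unfolding hh_def mu nu d using arg_cong[OF hh_int, of rat_of_int] by (simp add: algebra_simps)
  show ?dd ?tt ?lincomb ?hh
    unfolding m_def[symmetric] unfolding idx using d tt lincomb_eq hh_eq by simp_all
qed

lemma fib_odd_index_identities:
  assumes "odd n" "n \<ge> 3"
  shows "(F (n - 2) - 1) * (F (n - 1) - 1) + (1 - F (n - 3)) * ((F (n - 1) - 1) + (F (n - 2) + 1))
      = 2" (is ?lincomb)
    and "(1 - F (n - 3)) * (F (n - 1) - 1) + (F (n - 2) - 1) * (F (n - 2) + 1) = lucas (n - 2) - 1"
      (is ?h)
proof -
  define j where "j = n - 3"
  have "even j" and idx: "n - 3 = j" "n - 2 = j + 1" "n - 1 = j + 2"
    using assms unfolding j_def by presburger+
  then have "(-1::int) ^ j = 1" by simp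
  with fib_Cassini_int'[of j] show ?lincomb ?h
    unfolding idx lucas_eq_fib by (simp_all add: algebra_simps power2_eq_square)
qed

lemma even_dd_arguments_iff_3_dvd:
  assumes "n \<ge> 3"
  shows "even (F (n - 2) + 1) \<and> even (F (n - 1) - 1) \<longleftrightarrow> 3 dvd n"
proof -
  have "even (F (n - 2) + 1) \<longleftrightarrow> \<not> 3 dvd (n - 2)" "even (F (n - 1) - 1) \<longleftrightarrow> \<not> 3 dvd (n - 1)"
    using even_fib_iff_3_dvd[of "n - 2"] even_fib_iff_3_dvd[of "n - 1"] by simp_all
  with assms show ?thesis by presburger
qed

lemma dd_odd:
  assumes "odd n" "n \<ge> 3"
  shows "dd n = (if 3 dvd n then 2 else 1)"
proof -
  have "(1 - F (n - 3)) * (F (n - 2) + 1) + (F (n - 2) - F (n - 3)) * (F (n - 1) - 1) = 2"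
    using fib_odd_index_identities(1)[OF assms] by (simp add: algebra_simps)
  from gcd_eq_if_lincomb_eq_2[OF this] show ?thesis
    unfolding dd_def even_dd_arguments_iff_3_dvd[OF assms(2)] .
qed

lemma case_odd_not_3_dvd:
  assumes "odd n" "\<not> 3 dvd n" "n \<ge> 3"
  shows "dd n = 1" and "tt n = of_int (lucas n)"
    and "(of_int (F (n - 2)) - 1) / 2 * mu n + (1 - of_int (F (n - 3))) / 2 * (mu n + nu n) = 1"
      (is ?lincomb)
    and "hh n ((of_int (F (n - 2)) - 1) / 2) ((1 - of_int (F (n - 3))) / 2)
      = (1 - of_int (lucas (n - 2))) / 2" (is ?hh)
proof -
  note ids = fib_odd_index_identities[OF assms(1,3)]
  show d: "dd n = 1" using dd_odd assms by simp
  show "tt n = of_int (lucas n)" unfolding tt_def d using \<open>odd n\<close> by simp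
  show ?lincomb
    unfolding mu_def nu_def d using arg_cong[OF ids(1), of rat_of_int] by (simp add: field_simps)
  show ?hh
    unfolding hh_def mu_def nu_def d using arg_cong[OF ids(2), of rat_of_int]
    by (simp add: field_simps)
qed

lemma case_odd_3_dvd:
  assumes "odd n" "3 dvd n" "n \<ge> 3"
  shows "dd n = 2" and "tt n = of_int (lucas n) / 2"
    and "(of_int (F (n - 2)) - 1) * mu n + (1 - of_int (F (n - 3))) * (mu n + nu n) = 1"
      (is ?lincomb)
    and "hh n (of_int (F (n - 2)) - 1) (1 - of_int (F (n - 3))) = 1 - of_int (lucas (n - 2))"
      (is ?hh)
proof -
  note ids = fib_odd_index_identities[OF assms(1,3)]
  show d: "dd n = 2" using dd_odd assms by simp
  show "tt n = of_int (lucas n) / 2" unfolding tt_def d using \<open>odd n\<close> by simp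
  show ?lincomb
    unfolding mu_def nu_def d using arg_cong[OF ids(1), of rat_of_int] by (simp add: field_simps)
  show ?hh
    unfolding hh_def mu_def nu_def d using arg_cong[OF ids(2), of rat_of_int]
    by (simp add: field_simps)
qed

theorem proposition2p3p1:
  fixes n :: nat
  assumes "n \<ge> 3"
  shows
   "(n mod 4 = 0 \<longrightarrow>
      (let r = of_int (F (n div 2 - 1)); s = - of_int (F (n div 2 - 2)) in
        dd n = F (n div 2) \<and> tt n = 5 * of_int (F (n div 2)) \<and>
        r * mu n + s * (mu n + nu n) = 1 \<and> hh n r s = - 2 * of_int (F (n div 2))))
  \<and> (n mod 4 = 2 \<longrightarrow>
      (let r = of_int (F (n div 2 - 2)); s = - of_int (F (n div 2 - 3)) in
        dd n = lucas (n div 2) \<and> tt n = of_int (lucas (n div 2)) \<and>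
        r * mu n + s * (mu n + nu n) = 1 \<and> hh n r s = - of_int (lucas (n div 2))))
  \<and> (n mod 12 \<in> {1, 5, 7, 11} \<longrightarrow>
      (let r = (of_int (F (n - 2)) - 1) / 2; s = (1 - of_int (F (n - 3))) / 2 in
        dd n = 1 \<and> tt n = of_int (lucas n) \<and>
        r * mu n + s * (mu n + nu n) = 1 \<and> hh n r s = (1 - of_int (lucas (n - 2))) / 2))
  \<and> (n mod 12 \<in> {3, 9} \<longrightarrow>
      (let r = of_int (F (n - 2)) - 1; s = 1 - of_int (F (n - 3)) in
        dd n = 2 \<and> tt n = of_int (lucas n) / 2 \<and>
        r * mu n + s * (mu n + nu n) = (1::rat) \<and> hh n r s = 1 - of_int (lucas (n - 2))))"
proof -
  have mod_12: "n mod 12 \<in> {1, 5, 7, 11} \<longleftrightarrow> odd n \<and> \<not> 3 dvd n"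
    "n mod 12 \<in> {3, 9} \<longleftrightarrow> odd n \<and> 3 dvd n"
    by auto presburger+
  show ?thesis
    unfolding Let_def mod_12
    by (intro conjI impI; elim conjE case_mod_4_eq_0[OF _ assms] case_mod_4_eq_2[OF _ assms]
        case_odd_not_3_dvd[OF _ _ assms] case_odd_3_dvd[OF _ _ assms]; assumption)
qed

end
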